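(* Let $\Delta$ be a mesh and let $A:\Delta\to\mathbb{R}$ be 1-increasing. Then: (a) $A$ is grounded if and only if $A^{\mathrm{BL}}$ is grounded; (b) $1$ is a neutral element for $A$ if and only if $1$ is a neutral element for $A^{\mathrm{BL}}$; (c) $A$ is 2-increasing if and only if $A^{\mathrm{BL}}$ is 2-increasing; (d) $A$ is quasi-2-increasing if and only if $A^{\mathrm{BL}}$ is quasi-2-increasing; (e) $A$ is a discrete copula if and only if $A^{\mathrm{BL}}$ is a copula; (f) $A$ is a discrete quasi-copula if and only if $A^{\mathrm{BL}}$ is a quasi-copula.
   Context: A mesh is $\Delta=\delta_x\times\delta_y$ with $\delta_x=\{0=x_0<\dots<x_p=1\}$, $\delta_y=\{0=y_0<\dots<y_q=1\}$. A function is 1-increasing if it is nondecreasing in each variable. $A^{\mathrm{BL}}:[0,1]^2\to\mathbb{R}$ is the function which on each cell $[x_{i-1},x_i]\times[y_{j-1},y_j]$ equals the bilinear interpolation (the unique function taking the given corner values and affine in each variable separately) of the values of $A$ at the cell's corners. Let $\mathbb{D}$ denote either $[0,1]^2$ or a mesh $\Delta$, and let $A:\mathbb{D}\to\mathbb{R}$. For a rectangle $[s_1,s_2]\times[t_1,t_2]$ with corners in $\mathbb{D}$, $V_A=A(s_1,t_1)+A(s_2,t_2)-A(s_2,t_1)-A(s_1,t_2)$. $A$ is grounded if $A(x,0)=0=A(0,y)$ whenever these points are in $\mathbb{D}$; $1$ is a neutral element if $A(x,1)=x$ and $A(1,y)=y$ whenever these points are in $\mathbb{D}$; $A$ is 2-increasing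 if $V_A(R)\ge0$ for every rectangle with corners in $\mathbb{D}$; $A$ is quasi-2-increasing if $V_A(R)\ge0$ for every rectangle with corners in $\mathbb{D}$ at least one of whose sides lies on the boundary of $[0,1]^2$. On $[0,1]^2$, a grounded, 2-increasing function with neutral element 1 is a copula and a grounded, quasi-2-increasing function with neutral element 1 is a quasi-copula; on a mesh $\Delta$ these are called a discrete copula and a discrete quasi-copula, respectively. *)

theory Defs
  imports Complex_Main
begin

text \<open>A function on the mesh is
  represented by a function A :: real => real => real of which only the values on
  X \<times> Y are relevant.\<close>

definition is_mesh :: "real set \<Rightarrow> real set \<Rightarrow> bool" where
  "is_mesh X Y \<longleftrightarrow> finite X \<and> finite Y \<and> 0 \<in> X \<and> 1 \<in> X \<and> 0 \<in> Y \<and> 1 \<in> Y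
      \<and> X \<subseteq> {0..1} \<and> Y \<subseteq> {0..1}"

definition one_increasing_mesh :: "real set \<Rightarrow> real set \<Rightarrow> (real \<Rightarrow> real \<Rightarrow> real) \<Rightarrow> bool" where
  "one_increasing_mesh X Y A \<longleftrightarrow>
     (\<forall>x\<in>X. \<forall>y1\<in>Y. \<forall>y2\<in>Y. y1 \<le> y2 \<longrightarrow> A x y1 \<le> A x y2) \<and>
     (\<forall>y\<in>Y. \<forall>x1\<in>X. \<forall>x2\<in>X. x1 \<le> x2 \<longrightarrow> A x1 y \<le> A x2 y)"

definition lower_pt :: "real set \<Rightarrow> real \<Rightarrow> real" where
  "lower_pt P t = Max {a \<in> P. a \<le> t}"

definition upper_pt :: "real set \<Rightarrow> real \<Rightarrow> real" where
  "upper_pt P t = Min {a \<in> P. t \<le> a}"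

definition rel_pos :: "real set \<Rightarrow> real \<Rightarrow> real" where
  "rel_pos P t = (if upper_pt P t = lower_pt P t then 0
                  else (t - lower_pt P t) / (upper_pt P t - lower_pt P t))"

definition bilinear_ext :: "real set \<Rightarrow> real set \<Rightarrow> (real \<Rightarrow> real \<Rightarrow> real) \<Rightarrow> real \<Rightarrow> real \<Rightarrow> real" where
  "bilinear_ext X Y A x y =
     (let x1 = lower_pt X x; x2 = upper_pt X x; y1 = lower_pt Y y; y2 = upper_pt Y y;
          l = rel_pos X x; m = rel_pos Y y
      in (1 - l) * (1 - m) * A x1 y1 + l * (1 - m) * A x2 y1
         + (1 - l) * m * A x1 y2 + l * m * A x2 y2)"

text \<open>Properties relative to a domain D (either [0,1]^2 or a mesh X \<times> Y).\<close>

definition Vol :: "(real \<Rightarrow> real \<Rightarrow> real) \<Rightarrow> real \<Rightarrow> real \<Rightarrow> real \<Rightarrow> real \<Rightarrow> real" where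
  "Vol A s1 s2 t1 t2 = A s1 t1 + A s2 t2 - A s2 t1 - A s1 t2"

definition grounded_on :: "(real \<times> real) set \<Rightarrow> (real \<Rightarrow> real \<Rightarrow> real) \<Rightarrow> bool" where
  "grounded_on D A \<longleftrightarrow> (\<forall>x. (x, 0) \<in> D \<longrightarrow> A x 0 = 0) \<and> (\<forall>y. (0, y) \<in> D \<longrightarrow> A 0 y = 0)"

definition neutral_one_on :: "(real \<times> real) set \<Rightarrow> (real \<Rightarrow> real \<Rightarrow> real) \<Rightarrow> bool" where
  "neutral_one_on D A \<longleftrightarrow> (\<forall>x. (x, 1) \<in> D \<longrightarrow> A x 1 = x) \<and> (\<forall>y. (1, y) \<in> D \<longrightarrow> A 1 y = y)"

definition corners_in :: "(real \<times> real) set \<Rightarrow> real \<Rightarrow> real \<Rightarrow> real \<Rightarrow> real \<Rightarrow> bool" where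
  "corners_in D s1 s2 t1 t2 \<longleftrightarrow> s1 \<le> s2 \<and> t1 \<le> t2 \<and>
     (s1, t1) \<in> D \<and> (s1, t2) \<in> D \<and> (s2, t1) \<in> D \<and> (s2, t2) \<in> D"

definition two_increasing_on :: "(real \<times> real) set \<Rightarrow> (real \<Rightarrow> real \<Rightarrow> real) \<Rightarrow> bool" where
  "two_increasing_on D A \<longleftrightarrow>
     (\<forall>s1 s2 t1 t2. corners_in D s1 s2 t1 t2 \<longrightarrow> Vol A s1 s2 t1 t2 \<ge> 0)"

definition quasi_two_increasing_on :: "(real \<times> real) set \<Rightarrow> (real \<Rightarrow> real \<Rightarrow> real) \<Rightarrow> bool" where
  "quasi_two_increasing_on D A \<longleftrightarrow>
     (\<forall>s1 s2 t1 t2. corners_in D s1 s2 t1 t2 \<and> (s1 = 0 \<or> s2 = 1 \<or> t1 = 0 \<or> t2 = 1)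
        \<longrightarrow> Vol A s1 s2 t1 t2 \<ge> 0)"

definition unit_sq :: "(real \<times> real) set" where
  "unit_sq = {0..1} \<times> {0..1}"

definition copula :: "(real \<Rightarrow> real \<Rightarrow> real) \<Rightarrow> bool" where
  "copula C \<longleftrightarrow> grounded_on unit_sq C \<and> two_increasing_on unit_sq C \<and> neutral_one_on unit_sq C"

definition quasi_copula :: "(real \<Rightarrow> real \<Rightarrow> real) \<Rightarrow> bool" where
  "quasi_copula C \<longleftrightarrow> grounded_on unit_sq C \<and> quasi_two_increasing_on unit_sq C \<and> neutral_one_on unit_sq C"

definition discrete_copula :: "real set \<Rightarrow> real set \<Rightarrow> (real \<Rightarrow> real \<Rightarrow> real) \<Rightarrow> bool" where
  "discrete_copula X Y A \<longleftrightarrow> grounded_on (X \<times> Y) A \<and> two_increasing_on (X \<times> Y) A \<and> neutral_one_on (X \<times> Y) A"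

definition discrete_quasi_copula :: "real set \<Rightarrow> real set \<Rightarrow> (real \<Rightarrow> real \<Rightarrow> real) \<Rightarrow> bool" where
  "discrete_quasi_copula X Y A \<longleftrightarrow> grounded_on (X \<times> Y) A \<and> quasi_two_increasing_on (X \<times> Y) A \<and> neutral_one_on (X \<times> Y) A"

end

theory Submission
  imports Defs
begin

text \<open>The bilinear extension is linear interpolation in x applied to linear interpolation
  in y. Linear interpolation over a partition is a positive linear operator that fixes
  the nodes and is monotone in its argument whenever the interpolated data are monotone
  on the nodes. So the volume of a rectangle under the extension is the interpolation in x
  of the column increments, and these are nondecreasing on the nodes of the mesh exactly
  when A is (quasi-)2-increasing there. Grounding and the neutral element hold on the
  boundary lines because interpolation reproduces constants and the identity. The converse
  directions hold because the extension agrees with A on the mesh.\<close>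

definition partition01 :: "real set \<Rightarrow> bool" where
  "partition01 P \<longleftrightarrow> finite P \<and> 0 \<in> P \<and> 1 \<in> P \<and> P \<subseteq> {0..1}"

definition lin_interp :: "real set \<Rightarrow> (real \<Rightarrow> real) \<Rightarrow> real \<Rightarrow> real" where
  "lin_interp P f t = (1 - rel_pos P t) * f (lower_pt P t) + rel_pos P t * f (upper_pt P t)"

lemma is_mesh_partition01: "is_mesh X Y \<Longrightarrow> partition01 X \<and> partition01 Y"
  unfolding is_mesh_def partition01_def by auto

lemma lower_pt:
  assumes "partition01 P" "t \<in> {0..1}"
  shows "lower_pt P t \<in> P" "lower_pt P t \<le> t" "\<And>a. a \<in> P \<Longrightarrow> a \<le> t \<Longrightarrow> a \<le> lower_pt P t"
proof -
  have fin: "finite {a \<in> P. a \<le> t}" and ne: "0 \<in> {a \<in> P. a \<le> t}"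
    using assms by (auto simp: partition01_def)
  show "lower_pt P t \<in> P" "lower_pt P t \<le> t"
    using Max_in[OF fin] ne unfolding lower_pt_def by auto
  show "\<And>a. a \<in> P \<Longrightarrow> a \<le> t \<Longrightarrow> a \<le> lower_pt P t"
    using Max_ge[OF fin] unfolding lower_pt_def by auto
qed

lemma upper_pt:
  assumes "partition01 P" "t \<in> {0..1}"
  shows "upper_pt P t \<in> P" "t \<le> upper_pt P t" "\<And>a. a \<in> P \<Longrightarrow> t \<le> a \<Longrightarrow> upper_pt P t \<le> a"
proof -
  have fin: "finite {a \<in> P. t \<le> a}" and ne: "1 \<in> {a \<in> P. t \<le> a}"
    using assms by (auto simp: partition01_def)
  show "upper_pt P t \<in> P" "t \<le> upper_pt P t"
    using Min_in[OF fin] ne unfolding upper_pt_def by auto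
  show "\<And>a. a \<in> P \<Longrightarrow> t \<le> a \<Longrightarrow> upper_pt P t \<le> a"
    using Min_le[OF fin] unfolding upper_pt_def by auto
qed

lemma rel_pos_bounds:
  assumes "partition01 P" "t \<in> {0..1}"
  shows "0 \<le> rel_pos P t" "rel_pos P t \<le> 1"
  using lower_pt[OF assms] upper_pt[OF assms] by (auto simp: rel_pos_def divide_simps)

lemma lin_interp_node:
  assumes "partition01 P" "a \<in> P"
  shows "lin_interp P f a = f a"
proof -
  have a: "a \<in> {0..1}" using assms by (auto simp: partition01_def)
  have "lower_pt P a = a" "upper_pt P a = a"
    using lower_pt[OF assms(1) a] upper_pt[OF assms(1) a] assms(2) by (meson order_antisym order_refl)+
  then show ?thesis by (simp add: lin_interp_def rel_pos_def)
qed

lemma lin_interp_diff: "lin_interp P (\<lambda>a. f a - g a) t = lin_interp P f t - lin_interp P g t"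
  by (simp add: lin_interp_def algebra_simps)

lemma lin_interp_const: "lin_interp P (\<lambda>a. c) t = c"
  by (simp add: lin_interp_def algebra_simps)

lemma lin_interp_mono_data:
  assumes "partition01 P" "t \<in> {0..1}" "\<And>a. a \<in> P \<Longrightarrow> f a \<le> g a"
  shows "lin_interp P f t \<le> lin_interp P g t"
proof -
  have "f (lower_pt P t) \<le> g (lower_pt P t)" "f (upper_pt P t) \<le> g (upper_pt P t)"
    using assms(3) lower_pt[OF assms(1,2)] upper_pt[OF assms(1,2)] by auto
  then show ?thesis
    unfolding lin_interp_def using rel_pos_bounds[OF assms(1,2)]
    by (intro add_mono mult_left_mono) auto
qed

lemma lin_interp_cong:
  assumes "partition01 P" "t \<in> {0..1}" "\<And>a. a \<in> P \<Longrightarrow> f a = g a"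
  shows "lin_interp P f t = lin_interp P g t"
  using lin_interp_mono_data[OF assms(1,2)] assms(3) by (metis order_antisym order_refl)

lemma lin_interp_id:
  assumes "partition01 P" "t \<in> {0..1}"
  shows "lin_interp P (\<lambda>a. a) t = t"
proof (cases "upper_pt P t = lower_pt P t")
  case True
  then show ?thesis
    using lower_pt[OF assms] upper_pt[OF assms] by (simp add: lin_interp_def rel_pos_def)
next
  case False
  have "lin_interp P (\<lambda>a. a) t = lower_pt P t + rel_pos P t * (upper_pt P t - lower_pt P t)"
    by (simp add: lin_interp_def algebra_simps)
  also have "rel_pos P t * (upper_pt P t - lower_pt P t) = t - lower_pt P t"
    using False by (simp add: rel_pos_def)
  finally show ?thesis by simp
qed

lemma lin_interp_same_cell:
  assumes P: "partition01 P" and s: "s \<in> {0..1}" and t: "t \<in> {0..1}" and "s \<le> t"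
    and "lower_pt P t < upper_pt P s"
  shows "lower_pt P s = lower_pt P t" "upper_pt P s = upper_pt P t"
proof -
  note ls = lower_pt[OF P s] and us = upper_pt[OF P s]
  note lt = lower_pt[OF P t] and ut = upper_pt[OF P t]
  have "lower_pt P t < s" using us(3)[OF lt(1)] assms(5) by fastforce
  then show "lower_pt P s = lower_pt P t"
    using ls(3)[OF lt(1)] lt(3)[OF ls(1)] ls(2) \<open>s \<le> t\<close> by fastforce
  have "t < upper_pt P s" using lt(3)[OF us(1)] assms(5) by fastforce
  then show "upper_pt P s = upper_pt P t"
    using ut(3)[OF us(1)] us(3)[OF ut(1)] ut(2) \<open>s \<le> t\<close> by fastforce
qed

lemma lin_interp_mono:
  assumes P: "partition01 P" and s: "s \<in> {0..1}" and t: "t \<in> {0..1}" and st: "s \<le> t"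
    and mono: "\<And>a b. a \<in> P \<Longrightarrow> b \<in> P \<Longrightarrow> a \<le> b \<Longrightarrow> f a \<le> f b"
  shows "lin_interp P f s \<le> lin_interp P f t"
proof -
  note ls = lower_pt[OF P s] and us = upper_pt[OF P s]
  note lt = lower_pt[OF P t] and ut = upper_pt[OF P t]
  have cell_s: "f (lower_pt P s) \<le> f (upper_pt P s)" using ls us by (intro mono) auto
  have cell_t: "f (lower_pt P t) \<le> f (upper_pt P t)" using lt ut by (intro mono) auto
  have rs: "0 \<le> rel_pos P s" "rel_pos P s \<le> 1" and rt: "0 \<le> rel_pos P t"
    using rel_pos_bounds[OF P s] rel_pos_bounds[OF P t] by auto
  have lin_s: "lin_interp P f s = f (lower_pt P s) + rel_pos P s * (f (upper_pt P s) - f (lower_pt P s))"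
    and lin_t: "lin_interp P f t = f (lower_pt P t) + rel_pos P t * (f (upper_pt P t) - f (lower_pt P t))"
    by (simp_all add: lin_interp_def algebra_simps)
  show ?thesis
  proof (cases "upper_pt P s \<le> lower_pt P t")
    case True
    have "lin_interp P f s \<le> f (upper_pt P s)"
      unfolding lin_s using cell_s rs
        mult_left_le_one_le[of "f (upper_pt P s) - f (lower_pt P s)" "rel_pos P s"] by auto
    also have "\<dots> \<le> f (lower_pt P t)" using True us lt by (intro mono) auto
    also have "\<dots> \<le> lin_interp P f t" unfolding lin_t using cell_t rt by auto
    finally show ?thesis .
  next
    case False
    then have L: "lower_pt P s = lower_pt P t" and U: "upper_pt P s = upper_pt P t"
      using lin_interp_same_cell[OF P s t st] by auto
    have "rel_pos P s \<le> rel_pos P t"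
      using L U st lt(2) ut(2) by (simp add: rel_pos_def divide_right_mono)
    then show ?thesis
      unfolding lin_s lin_t L U using cell_t by (simp add: mult_right_mono)
  qed
qed

lemma bilinear_ext_interp_x: "bilinear_ext X Y A x y = lin_interp X (\<lambda>a. lin_interp Y (A a) y) x"
  by (simp add: bilinear_ext_def lin_interp_def Let_def algebra_simps)

lemma bilinear_ext_interp_y: "bilinear_ext X Y A x y = lin_interp Y (\<lambda>b. lin_interp X (\<lambda>a. A a b) x) y"
  by (simp add: bilinear_ext_def lin_interp_def Let_def algebra_simps)

lemma bilinear_ext_swap: "bilinear_ext X Y A x y = bilinear_ext Y X (\<lambda>b a. A a b) y x"
  by (simp add: bilinear_ext_def Let_def algebra_simps)

lemma bilinear_ext_node:
  "partition01 X \<Longrightarrow> partition01 Y \<Longrightarrow> a \<in> X \<Longrightarrow> b \<in> Y \<Longrightarrow> bilinear_ext X Y A a b = A a b"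
  by (simp add: bilinear_ext_interp_x lin_interp_node)

lemma Vol_bilinear_ext_nonneg:
  assumes X: "partition01 X" and s: "s1 \<in> {0..1}" "s2 \<in> {0..1}" "s1 \<le> s2"
    and incr_mono: "\<And>a a'. a \<in> X \<Longrightarrow> a' \<in> X \<Longrightarrow> a \<le> a' \<Longrightarrow>
        lin_interp Y (A a) t2 - lin_interp Y (A a) t1 \<le> lin_interp Y (A a') t2 - lin_interp Y (A a') t1"
  shows "Vol (bilinear_ext X Y A) s1 s2 t1 t2 \<ge> 0"
proof -
  have "lin_interp X (\<lambda>a. lin_interp Y (A a) t2 - lin_interp Y (A a) t1) s1
      \<le> lin_interp X (\<lambda>a. lin_interp Y (A a) t2 - lin_interp Y (A a) t1) s2"
    by (rule lin_interp_mono[OF X s]) (rule incr_mono)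
  then show ?thesis unfolding Vol_def bilinear_ext_interp_x lin_interp_diff by simp
qed

lemma two_increasing_bilinear_ext:
  assumes X: "partition01 X" and Y: "partition01 Y" and A: "two_increasing_on (X \<times> Y) A"
  shows "two_increasing_on unit_sq (bilinear_ext X Y A)"
  unfolding two_increasing_on_def
proof (intro allI impI)
  fix s1 s2 t1 t2 assume "corners_in unit_sq s1 s2 t1 t2"
  then have s: "s1 \<in> {0..1}" "s2 \<in> {0..1}" "s1 \<le> s2" and t: "t1 \<in> {0..1}" "t2 \<in> {0..1}" "t1 \<le> t2"
    by (auto simp: corners_in_def unit_sq_def)
  show "Vol (bilinear_ext X Y A) s1 s2 t1 t2 \<ge> 0"
  proof (rule Vol_bilinear_ext_nonneg[OF X s])
    fix a a' assume a: "a \<in> X" "a' \<in> X" "a \<le> a'"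
    have "lin_interp Y (\<lambda>b. A a' b - A a b) t1 \<le> lin_interp Y (\<lambda>b. A a' b - A a b) t2"
    proof (rule lin_interp_mono[OF Y t])
      fix b b' assume "b \<in> Y" "b' \<in> Y" "b \<le> b'"
      then have "Vol A a a' b b' \<ge> 0" using A a unfolding two_increasing_on_def corners_in_def by auto
      then show "A a' b - A a b \<le> A a' b' - A a b'" by (simp add: Vol_def)
    qed
    then show "lin_interp Y (A a) t2 - lin_interp Y (A a) t1 \<le> lin_interp Y (A a') t2 - lin_interp Y (A a') t1"
      unfolding lin_interp_diff by simp
  qed
qed

lemma Vol_bilinear_ext_bottom_nonneg:
  assumes X: "partition01 X" and Y: "partition01 Y" and A: "quasi_two_increasing_on (X \<times> Y) A"
    and s: "s1 \<in> {0..1}" "s2 \<in> {0..1}" "s1 \<le> s2" and t: "t \<in> {0..1}"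
  shows "Vol (bilinear_ext X Y A) s1 s2 0 t \<ge> 0"
proof (rule Vol_bilinear_ext_nonneg[OF X s])
  fix a a' assume a: "a \<in> X" "a' \<in> X" "a \<le> a'"
  have Y0: "0 \<in> Y" using Y by (auto simp: partition01_def)
  have "lin_interp Y (\<lambda>b. A a' 0 - A a 0) t \<le> lin_interp Y (\<lambda>b. A a' b - A a b) t"
  proof (rule lin_interp_mono_data[OF Y t])
    fix b assume b: "b \<in> Y"
    then have "Vol A a a' 0 b \<ge> 0"
      using A a Y0 Y unfolding quasi_two_increasing_on_def corners_in_def partition01_def by auto
    then show "A a' 0 - A a 0 \<le> A a' b - A a b" by (simp add: Vol_def)
  qed
  then show "lin_interp Y (A a) t - lin_interp Y (A a) 0 \<le> lin_interp Y (A a') t - lin_interp Y (A a') 0"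
    unfolding lin_interp_diff lin_interp_const lin_interp_node[OF Y Y0] by simp
qed

lemma Vol_bilinear_ext_top_nonneg:
  assumes X: "partition01 X" and Y: "partition01 Y" and A: "quasi_two_increasing_on (X \<times> Y) A"
    and s: "s1 \<in> {0..1}" "s2 \<in> {0..1}" "s1 \<le> s2" and t: "t \<in> {0..1}"
  shows "Vol (bilinear_ext X Y A) s1 s2 t 1 \<ge> 0"
proof (rule Vol_bilinear_ext_nonneg[OF X s])
  fix a a' assume a: "a \<in> X" "a' \<in> X" "a \<le> a'"
  have Y1: "1 \<in> Y" using Y by (auto simp: partition01_def)
  have "lin_interp Y (\<lambda>b. A a' b - A a b) t \<le> lin_interp Y (\<lambda>b. A a' 1 - A a 1) t"
  proof (rule lin_interp_mono_data[OF Y t])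
    fix b assume b: "b \<in> Y"
    then have "Vol A a a' b 1 \<ge> 0"
      using A a Y1 Y unfolding quasi_two_increasing_on_def corners_in_def partition01_def by auto
    then show "A a' b - A a b \<le> A a' 1 - A a 1" by (simp add: Vol_def)
  qed
  then show "lin_interp Y (A a) 1 - lin_interp Y (A a) t \<le> lin_interp Y (A a') 1 - lin_interp Y (A a') t"
    unfolding lin_interp_diff lin_interp_const lin_interp_node[OF Y Y1] by simp
qed

lemma quasi_two_increasing_on_swap:
  assumes "quasi_two_increasing_on (X \<times> Y) A"
  shows "quasi_two_increasing_on (Y \<times> X) (\<lambda>b a. A a b)"
  unfolding quasi_two_increasing_on_def
proof (intro allI impI)
  fix s1 s2 t1 t2 assume "corners_in (Y \<times> X) s1 s2 t1 t2 \<and> (s1 = 0 \<or> s2 = 1 \<or> t1 = 0 \<or> t2 = 1)"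
  then have "corners_in (X \<times> Y) t1 t2 s1 s2 \<and> (t1 = 0 \<or> t2 = 1 \<or> s1 = 0 \<or> s2 = 1)"
    by (auto simp: corners_in_def)
  then have "Vol A t1 t2 s1 s2 \<ge> 0" using assms unfolding quasi_two_increasing_on_def by blast
  then show "Vol (\<lambda>b a. A a b) s1 s2 t1 t2 \<ge> 0" by (simp add: Vol_def)
qed

lemma quasi_two_increasing_bilinear_ext:
  assumes X: "partition01 X" and Y: "partition01 Y" and A: "quasi_two_increasing_on (X \<times> Y) A"
  shows "quasi_two_increasing_on unit_sq (bilinear_ext X Y A)"
  unfolding quasi_two_increasing_on_def
proof (intro allI impI, elim conjE)
  fix s1 s2 t1 t2
  assume "corners_in unit_sq s1 s2 t1 t2" and side: "s1 = 0 \<or> s2 = 1 \<or> t1 = 0 \<or> t2 = 1"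
  then have s: "s1 \<in> {0..1}" "s2 \<in> {0..1}" "s1 \<le> s2" and t: "t1 \<in> {0..1}" "t2 \<in> {0..1}" "t1 \<le> t2"
    by (auto simp: corners_in_def unit_sq_def)
  note A' = quasi_two_increasing_on_swap[OF A]
  have swap: "Vol (bilinear_ext X Y A) s1 s2 t1 t2 = Vol (bilinear_ext Y X (\<lambda>b a. A a b)) t1 t2 s1 s2"
    unfolding Vol_def by (simp add: bilinear_ext_swap[of X Y A])
  from side show "Vol (bilinear_ext X Y A) s1 s2 t1 t2 \<ge> 0"
    using Vol_bilinear_ext_bottom_nonneg[OF Y X A' t s(2)] Vol_bilinear_ext_top_nonneg[OF Y X A' t s(1)]
      Vol_bilinear_ext_bottom_nonneg[OF X Y A s t(2)] Vol_bilinear_ext_top_nonneg[OF X Y A s t(1)]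
      swap by auto
qed

lemma grounded_bilinear_ext:
  assumes X: "partition01 X" and Y: "partition01 Y" and A: "grounded_on (X \<times> Y) A"
  shows "grounded_on unit_sq (bilinear_ext X Y A)"
proof -
  have X0: "0 \<in> X" and Y0: "0 \<in> Y" using X Y by (auto simp: partition01_def)
  have "bilinear_ext X Y A x 0 = 0" if "x \<in> {0..1}" for x
  proof -
    have "bilinear_ext X Y A x 0 = lin_interp X (\<lambda>a. A a 0) x"
      by (simp add: bilinear_ext_interp_y lin_interp_node[OF Y Y0])
    also have "\<dots> = lin_interp X (\<lambda>a. 0) x"
      using A Y0 by (intro lin_interp_cong[OF X that]) (auto simp: grounded_on_def)
    finally show ?thesis by (simp add: lin_interp_const)
  qed
  moreover have "bilinear_ext X Y A 0 y = 0" if "y \<in> {0..1}" for y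
  proof -
    have "bilinear_ext X Y A 0 y = lin_interp Y (A 0) y"
      by (simp add: bilinear_ext_interp_x lin_interp_node[OF X X0])
    also have "\<dots> = lin_interp Y (\<lambda>b. 0) y"
      using A X0 by (intro lin_interp_cong[OF Y that]) (auto simp: grounded_on_def)
    finally show ?thesis by (simp add: lin_interp_const)
  qed
  ultimately show ?thesis by (auto simp: grounded_on_def unit_sq_def)
qed

lemma neutral_one_bilinear_ext:
  assumes X: "partition01 X" and Y: "partition01 Y" and A: "neutral_one_on (X \<times> Y) A"
  shows "neutral_one_on unit_sq (bilinear_ext X Y A)"
proof -
  have X1: "1 \<in> X" and Y1: "1 \<in> Y" using X Y by (auto simp: partition01_def)
  have "bilinear_ext X Y A x 1 = x" if "x \<in> {0..1}" for x
  proof -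
    have "bilinear_ext X Y A x 1 = lin_interp X (\<lambda>a. A a 1) x"
      by (simp add: bilinear_ext_interp_y lin_interp_node[OF Y Y1])
    also have "\<dots> = lin_interp X (\<lambda>a. a) x"
      using A Y1 by (intro lin_interp_cong[OF X that]) (auto simp: neutral_one_on_def)
    finally show ?thesis by (simp add: lin_interp_id[OF X that])
  qed
  moreover have "bilinear_ext X Y A 1 y = y" if "y \<in> {0..1}" for y
  proof -
    have "bilinear_ext X Y A 1 y = lin_interp Y (A 1) y"
      by (simp add: bilinear_ext_interp_x lin_interp_node[OF X X1])
    also have "\<dots> = lin_interp Y (\<lambda>b. b) y"
      using A X1 by (intro lin_interp_cong[OF Y that]) (auto simp: neutral_one_on_def)
    finally show ?thesis by (simp add: lin_interp_id[OF Y that])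
  qed
  ultimately show ?thesis by (auto simp: neutral_one_on_def unit_sq_def)
qed

lemma grounded_on_subdomain:
  assumes "grounded_on E B" "D \<subseteq> E" "\<And>x y. (x, y) \<in> D \<Longrightarrow> A x y = B x y"
  shows "grounded_on D A"
  using assms unfolding grounded_on_def by (simp add: subset_iff)

lemma neutral_one_on_subdomain:
  assumes "neutral_one_on E B" "D \<subseteq> E" "\<And>x y. (x, y) \<in> D \<Longrightarrow> A x y = B x y"
  shows "neutral_one_on D A"
  using assms unfolding neutral_one_on_def by (simp add: subset_iff)

lemma corners_in_subdomain:
  assumes "corners_in D s1 s2 t1 t2" "D \<subseteq> E" "\<And>x y. (x, y) \<in> D \<Longrightarrow> A x y = B x y"
  shows "corners_in E s1 s2 t1 t2" "Vol A s1 s2 t1 t2 = Vol B s1 s2 t1 t2"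
proof -
  show "corners_in E s1 s2 t1 t2" using assms(1,2) unfolding corners_in_def by blast
  have "A s1 t1 = B s1 t1" "A s1 t2 = B s1 t2" "A s2 t1 = B s2 t1" "A s2 t2 = B s2 t2"
    using assms(1) unfolding corners_in_def by (simp_all add: assms(3))
  then show "Vol A s1 s2 t1 t2 = Vol B s1 s2 t1 t2" by (simp add: Vol_def)
qed

lemma two_increasing_on_subdomain:
  assumes "two_increasing_on E B" "D \<subseteq> E" "\<And>x y. (x, y) \<in> D \<Longrightarrow> A x y = B x y"
  shows "two_increasing_on D A"
  unfolding two_increasing_on_def
proof (intro allI impI)
  fix s1 s2 t1 t2 assume "corners_in D s1 s2 t1 t2"
  note c = corners_in_subdomain[OF this assms(2,3)]
  show "Vol A s1 s2 t1 t2 \<ge> 0" using assms(1) c unfolding two_increasing_on_def by simp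
qed

lemma quasi_two_increasing_on_subdomain:
  assumes "quasi_two_increasing_on E B" "D \<subseteq> E" "\<And>x y. (x, y) \<in> D \<Longrightarrow> A x y = B x y"
  shows "quasi_two_increasing_on D A"
  unfolding quasi_two_increasing_on_def
proof (intro allI impI, elim conjE)
  fix s1 s2 t1 t2 assume "corners_in D s1 s2 t1 t2" "s1 = 0 \<or> s2 = 1 \<or> t1 = 0 \<or> t2 = 1"
  note c = corners_in_subdomain[OF this(1) assms(2,3)]
  show "Vol A s1 s2 t1 t2 \<ge> 0"
    using assms(1) c \<open>s1 = 0 \<or> s2 = 1 \<or> t1 = 0 \<or> t2 = 1\<close> unfolding quasi_two_increasing_on_def by simp
qed

theorem mainTheorem4:
  fixes X Y :: "real set" and A :: "real \<Rightarrow> real \<Rightarrow> real"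
  assumes "is_mesh X Y" and "one_increasing_mesh X Y A"
  shows "(grounded_on (X \<times> Y) A \<longleftrightarrow> grounded_on unit_sq (bilinear_ext X Y A))
       \<and> (neutral_one_on (X \<times> Y) A \<longleftrightarrow> neutral_one_on unit_sq (bilinear_ext X Y A))
       \<and> (two_increasing_on (X \<times> Y) A \<longleftrightarrow> two_increasing_on unit_sq (bilinear_ext X Y A))
       \<and> (quasi_two_increasing_on (X \<times> Y) A \<longleftrightarrow> quasi_two_increasing_on unit_sq (bilinear_ext X Y A))
       \<and> (discrete_copula X Y A \<longleftrightarrow> copula (bilinear_ext X Y A))
       \<and> (discrete_quasi_copula X Y A \<longleftrightarrow> quasi_copula (bilinear_ext X Y A))"
proof -
  have X: "partition01 X" and Y: "partition01 Y" using is_mesh_partition01[OF assms(1)] by auto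
  have sub: "X \<times> Y \<subseteq> unit_sq" using X Y by (auto simp: partition01_def unit_sq_def)
  have agree: "\<And>x y. (x, y) \<in> X \<times> Y \<Longrightarrow> A x y = bilinear_ext X Y A x y"
    using bilinear_ext_node[OF X Y] by auto
  note restrict = grounded_on_subdomain neutral_one_on_subdomain two_increasing_on_subdomain
    quasi_two_increasing_on_subdomain
  note extend = grounded_bilinear_ext[OF X Y] neutral_one_bilinear_ext[OF X Y]
    two_increasing_bilinear_ext[OF X Y] quasi_two_increasing_bilinear_ext[OF X Y]
  have "grounded_on (X \<times> Y) A \<longleftrightarrow> grounded_on unit_sq (bilinear_ext X Y A)"
    and "neutral_one_on (X \<times> Y) A \<longleftrightarrow> neutral_one_on unit_sq (bilinear_ext X Y A)"
    and "two_increasing_on (X \<times> Y) A \<longleftrightarrow> two_increasing_on unit_sq (bilinear_ext X Y A)"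
    and "quasi_two_increasing_on (X \<times> Y) A \<longleftrightarrow> quasi_two_increasing_on unit_sq (bilinear_ext X Y A)"
    using restrict[where A = A and B = "bilinear_ext X Y A", OF _ sub agree] extend by blast+
  then show ?thesis
    by (simp add: discrete_copula_def copula_def discrete_quasi_copula_def quasi_copula_def)
qed

end
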